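(* Let $u=u(x,y,z,t)$ be a smooth function with $u_x\neq 0$ satisfying \[ D_z\!\left(\frac{u_y}{u_x}\right)-D_x\!\left(\frac{u_t}{u_x}\right)=0. \qquad (\ast) \] Call a smooth function $U$ a symmetry of $(\ast)$ (at $u$) if it satisfies the linearized equation \[ \ell(U):=D_z\!\left(\frac{u_xU_y-u_yU_x}{u_x^2}\right)-D_x\!\left(\frac{u_xU_t-u_tU_x}{u_x^2}\right)=0 . \] Consider the relations, for an unknown function $\tilde U$, \[ \tilde{U}_z-\frac{u_{xz}}{u_x}\,\tilde{U}=U_t-\frac{u_t}{u_x}\,U_x,\qquad \tilde{U}_x-\frac{u_{xx}}{u_x}\,\tilde{U}=U_y-\frac{u_y}{u_x}\,U_x. \qquad (\ast\ast) \] Then these relations define a recursion operator for $(\ast)$, namely: (a) if $u$ satisfies $(\ast)$ and $U$ satisfies $\ell(U)=0$, then the system $(\ast\ast)$, regarded as an overdetermined first-order system for $\tilde U$, is compatible (its cross-differentiation compatibility condition holds identically by virtue of $(\ast)$, $\ell(U)=0$ and their differential consequences); and (b) if $u$ satisfies $(\ast)$, $U$ satisfies $\ell(U)=0$, and $\tilde U$ satisfies $(\ast\ast)$, then $\ell(\tilde U)=0$, i.e. $\tilde U$ is again a symmetry of $(\ast)$.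
   Context: Subscripts denote partial derivatives and $D_x,D_y,D_z,D_t$ denote total derivatives. The linearized equation $\ell(U)=0$ is obtained by replacing $u$ by $u+\varepsilon U$ in the left-hand side of $(\ast)$ and taking the coefficient of $\varepsilon$ (the linearization). Symmetries here may be nonlocal, i.e. $U,\tilde U$ are arbitrary smooth functions satisfying the stated equations. The equation $(\ast)$ admits the Lax pair $\psi_t=\lambda\psi_z+(u_t/u_x)\psi_x$, $\psi_y=(\lambda+u_y/u_x)\psi_x$ with spectral parameter $\lambda$. *)

theory Defs
  imports "HOL-Analysis.Analysis"
begin

type_synonym fun4 = "real \<Rightarrow> real \<Rightarrow> real \<Rightarrow> real \<Rightarrow> real"

text \<open>Partial derivatives of a function of (x,y,z,t). For a function of the
independent variables only, total and partial derivatives coincide.\<close>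
definition px :: "fun4 \<Rightarrow> fun4" where
  "px f = (\<lambda>x y z t. deriv (\<lambda>s. f s y z t) x)"
definition py :: "fun4 \<Rightarrow> fun4" where
  "py f = (\<lambda>x y z t. deriv (\<lambda>s. f x s z t) y)"
definition pz :: "fun4 \<Rightarrow> fun4" where
  "pz f = (\<lambda>x y z t. deriv (\<lambda>s. f x y s t) z)"
definition pt :: "fun4 \<Rightarrow> fun4" where
  "pt f = (\<lambda>x y z t. deriv (\<lambda>s. f x y z s) t)"

definition uncurry4 :: "fun4 \<Rightarrow> real \<times> real \<times> real \<times> real \<Rightarrow> real" where
  "uncurry4 f p = f (fst p) (fst (snd p)) (fst (snd (snd p))) (snd (snd (snd p)))"

inductive_set pderivs :: "fun4 \<Rightarrow> fun4 set" for f where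
  base: "f \<in> pderivs f"
| dx: "g \<in> pderivs f \<Longrightarrow> px g \<in> pderivs f"
| dy: "g \<in> pderivs f \<Longrightarrow> py g \<in> pderivs f"
| dz: "g \<in> pderivs f \<Longrightarrow> pz g \<in> pderivs f"
| dt: "g \<in> pderivs f \<Longrightarrow> pt g \<in> pderivs f"

definition smooth_on4 :: "(real \<times> real \<times> real \<times> real) set \<Rightarrow> fun4 \<Rightarrow> bool" where
  "smooth_on4 S f \<longleftrightarrow> (\<forall>g\<in>pderivs f. \<forall>p\<in>S. uncurry4 g differentiable (at p))"

definition eqn :: "fun4 \<Rightarrow> fun4" where
  "eqn u = (\<lambda>x y z t.
     pz (\<lambda>x y z t. py u x y z t / px u x y z t) x y z t
   - px (\<lambda>x y z t. pt u x y z t / px u x y z t) x y z t)"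

definition lin :: "fun4 \<Rightarrow> fun4 \<Rightarrow> fun4" where
  "lin u U = (\<lambda>x y z t.
     pz (\<lambda>x y z t. (px u x y z t * py U x y z t - py u x y z t * px U x y z t)
                      / (px u x y z t)^2) x y z t
   - px (\<lambda>x y z t. (px u x y z t * pt U x y z t - pt u x y z t * px U x y z t)
                      / (px u x y z t)^2) x y z t)"

text \<open>The system (**) written as  Ut~_z = cA*Ut~ + rA,  Ut~_x = cB*Ut~ + rB.\<close>
definition cA :: "fun4 \<Rightarrow> fun4" where
  "cA u = (\<lambda>x y z t. pz (px u) x y z t / px u x y z t)"
definition rA :: "fun4 \<Rightarrow> fun4 \<Rightarrow> fun4" where
  "rA u U = (\<lambda>x y z t. pt U x y z t - pt u x y z t / px u x y z t * px U x y z t)"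
definition cB :: "fun4 \<Rightarrow> fun4" where
  "cB u = (\<lambda>x y z t. px (px u) x y z t / px u x y z t)"
definition rB :: "fun4 \<Rightarrow> fun4 \<Rightarrow> fun4" where
  "rB u U = (\<lambda>x y z t. py U x y z t - py u x y z t / px u x y z t * px U x y z t)"

text \<open>Cross-differentiation compatibility expression of (**): D_x of the right-hand
side of the z-equation minus D_z of the right-hand side of the x-equation, where the
derivatives of the unknown (value W) are replaced using (**) itself.\<close>
definition compat :: "fun4 \<Rightarrow> fun4 \<Rightarrow> real \<Rightarrow> fun4" where
  "compat u U W = (\<lambda>x y z t.
      (px (cA u) x y z t * W + cA u x y z t * (cB u x y z t * W + rB u U x y z t)
         + px (rA u U) x y z t)
    - (pz (cB u) x y z t * W + cB u x y z t * (cA u x y z t * W + rA u U x y z t)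
         + pz (rB u U) x y z t))"

end

theory Submission
  imports Defs
begin

(* Write p = u_y/u_x and q = u_t/u_x, so that the equation reads p_z = q_x and the system
   for U~ reads U~_z = (u_xz/u_x) U~ + A, U~_x = (u_xx/u_x) U~ + B with A = U_t - q U_x and
   B = U_y - p U_x.  By the quotient rule, u_x l(U) = D_z B - (u_xz/u_x) B - D_x A + (u_xx/u_x) A,
   and the cross-differentiation condition of the system is U~ (D_x(u_xz/u_x) - D_z(u_xx/u_x))
   minus this expression; the coefficient of U~ vanishes because mixed partials of u_x commute.
   For (b), eliminating all derivatives of U~ by the system turns l(U~) into a combination of
   the equation, its x-derivative and l(U).  Smoothness is given only as differentiability of
   all iterated partials, so the symmetry of mixed partials is proved here from the mean value
   theorem and continuity of the second partials. *)

lemma pderivs_trans: "h \<in> pderivs g \<Longrightarrow> g \<in> pderivs f \<Longrightarrow> h \<in> pderivs f"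
  by (induction h rule: pderivs.induct) (auto intro: pderivs.intros)

lemma smooth_on4_pderivs: "smooth_on4 S f \<Longrightarrow> g \<in> pderivs f \<Longrightarrow> smooth_on4 S g"
  unfolding smooth_on4_def by (meson pderivs_trans)

lemma uncurry4_apply [simp]: "uncurry4 f (x, y, z, t) = f x y z t"
  by (simp add: uncurry4_def)

lemma ball_prod4I: "(\<And>x y z t. (x, y, z, t) \<in> S \<Longrightarrow> P (x, y, z, t)) \<Longrightarrow> \<forall>q\<in>S. P q"
  by (metis prod_cases4)

lemma has_real_derivative_deriv_along:
  fixes F :: "'a::real_normed_vector \<Rightarrow> real"
  assumes "F differentiable (at (\<gamma> s))" "\<gamma> differentiable (at s)"
  shows "((\<lambda>r. F (\<gamma> r)) has_real_derivative deriv (\<lambda>r. F (\<gamma> r)) s) (at s)"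
proof -
  have "(F \<circ> \<gamma>) differentiable (at s)"
    using assms by (rule differentiable_chain_at[rotated])
  thus ?thesis by (simp add: o_def DERIV_deriv_iff_real_differentiable)
qed

context
  fixes S f g x y z t
  assumes smooth: "smooth_on4 S f" and g: "g \<in> pderivs f" and p: "(x, y, z, t) \<in> S"
begin

lemma has_px: "((\<lambda>s. g s y z t) has_real_derivative px g x y z t) (at x)"
  using has_real_derivative_deriv_along[of "uncurry4 g" "\<lambda>s. (s, y, z, t)"]
    smooth g p unfolding smooth_on4_def px_def by simp
lemma has_py: "((\<lambda>s. g x s z t) has_real_derivative py g x y z t) (at y)"
  using has_real_derivative_deriv_along[of "uncurry4 g" "\<lambda>s. (x, s, z, t)"]
    smooth g p unfolding smooth_on4_def py_def by simp
lemma has_pz: "((\<lambda>s. g x y s t) has_real_derivative pz g x y z t) (at z)"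
  using has_real_derivative_deriv_along[of "uncurry4 g" "\<lambda>s. (x, y, s, t)"]
    smooth g p unfolding smooth_on4_def pz_def by simp
lemma has_pt: "((\<lambda>s. g x y z s) has_real_derivative pt g x y z t) (at t)"
  using has_real_derivative_deriv_along[of "uncurry4 g" "\<lambda>s. (x, y, z, s)"]
    smooth g p unfolding smooth_on4_def pt_def by simp

end

lemma deriv_along_cong_on:
  assumes "open S" "\<forall>q\<in>S. F q = G q" "isCont \<gamma> s" "\<gamma> s \<in> S"
  shows "deriv (\<lambda>r. F (\<gamma> r)) s = deriv (\<lambda>r. G (\<gamma> r)) s"
proof -
  have "eventually (\<lambda>r. \<gamma> r \<in> S) (at s)"
    using assms(1,3,4) by (auto intro: topological_tendstoD simp: isCont_def)
  hence "eventually (\<lambda>r. \<gamma> r \<in> S) (nhds s)"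
    using assms(4) by (simp add: eventually_nhds_conv_at)
  hence "eventually (\<lambda>r. F (\<gamma> r) = G (\<gamma> r)) (nhds s)"
    by eventually_elim (use assms(2) in auto)
  thus ?thesis by (intro deriv_cong_ev) auto
qed

context
  fixes S F G x y z t
  assumes S: "open S" and eq: "\<forall>q\<in>S. uncurry4 F q = uncurry4 G q" and p: "(x, y, z, t) \<in> S"
begin

lemma px_cong_on: "px F x y z t = px G x y z t"
  using deriv_along_cong_on[OF S eq, where \<gamma>="\<lambda>s. (s, y, z, t)"] p unfolding px_def by simp
lemma py_cong_on: "py F x y z t = py G x y z t"
  using deriv_along_cong_on[OF S eq, where \<gamma>="\<lambda>s. (x, s, z, t)"] p unfolding py_def by simp
lemma pz_cong_on: "pz F x y z t = pz G x y z t"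
  using deriv_along_cong_on[OF S eq, where \<gamma>="\<lambda>s. (x, y, s, t)"] p unfolding pz_def by simp
lemma pt_cong_on: "pt F x y z t = pt G x y z t"
  using deriv_along_cong_on[OF S eq, where \<gamma>="\<lambda>s. (x, y, z, s)"] p unfolding pt_def by simp

end

lemma mixed_difference_MVT:
  fixes g gs gr gsr grs :: "real \<Rightarrow> real \<Rightarrow> real"
  assumes h: "0 < h"
    and Ds: "\<And>s r. s \<in> {x0..x0+h} \<Longrightarrow> r \<in> {y0..y0+h} \<Longrightarrow>
        ((\<lambda>s. g s r) has_real_derivative gs s r) (at s)"
    and Dr: "\<And>s r. s \<in> {x0..x0+h} \<Longrightarrow> r \<in> {y0..y0+h} \<Longrightarrow>
        ((\<lambda>r. g s r) has_real_derivative gr s r) (at r)"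
    and Dsr: "\<And>s r. s \<in> {x0..x0+h} \<Longrightarrow> r \<in> {y0..y0+h} \<Longrightarrow>
        ((\<lambda>r. gs s r) has_real_derivative gsr s r) (at r)"
    and Drs: "\<And>s r. s \<in> {x0..x0+h} \<Longrightarrow> r \<in> {y0..y0+h} \<Longrightarrow>
        ((\<lambda>s. gr s r) has_real_derivative grs s r) (at s)"
  obtains a b c e where "a \<in> {x0..x0+h}" "b \<in> {y0..y0+h}" "c \<in> {x0..x0+h}" "e \<in> {y0..y0+h}"
    "gsr a b = grs c e"
proof -
  have x0: "x0 < x0 + h" and y0: "y0 < y0 + h" using h by auto
  obtain a where a: "x0 < a" "a < x0 + h"
    "(g (x0+h) (y0+h) - g (x0+h) y0) - (g x0 (y0+h) - g x0 y0) = h * (gs a (y0+h) - gs a y0)"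
  proof -
    have "((\<lambda>s. g s (y0+h) - g s y0) has_real_derivative gs s (y0+h) - gs s y0) (at s)"
      if "x0 \<le> s" "s \<le> x0 + h" for s
      using that h by (intro DERIV_diff Ds) auto
    from MVT2[OF x0 this] show thesis using that by auto
  qed
  obtain b where b: "y0 < b" "b < y0 + h" "gs a (y0+h) - gs a y0 = h * gsr a b"
    using MVT2[OF y0, of "gs a" "gsr a"] a Dsr by fastforce
  obtain e where e: "y0 < e" "e < y0 + h"
    "(g (x0+h) (y0+h) - g x0 (y0+h)) - (g (x0+h) y0 - g x0 y0) = h * (gr (x0+h) e - gr x0 e)"
  proof -
    have "((\<lambda>r. g (x0+h) r - g x0 r) has_real_derivative gr (x0+h) r - gr x0 r) (at r)"
      if "y0 \<le> r" "r \<le> y0 + h" for r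
      using that h by (intro DERIV_diff Dr) auto
    from MVT2[OF y0 this] show thesis using that by auto
  qed
  obtain c where c: "x0 < c" "c < x0 + h" "gr (x0+h) e - gr x0 e = h * grs c e"
    using MVT2[OF x0, of "\<lambda>s. gr s e" "\<lambda>s. grs s e"] e Drs by fastforce
  have "h * (gs a (y0+h) - gs a y0) = h * (gr (x0+h) e - gr x0 e)"
    using a(3) e(3) by argo
  hence "h * (h * gsr a b) = h * (h * grs c e)"
    using b(3) c(3) by simp
  hence "gsr a b = grs c e" using h by simp
  thus thesis using a b c e by (intro that) auto
qed

lemma mixed_partials_commute:
  fixes g gs gr gsr grs :: "real \<Rightarrow> real \<Rightarrow> real"
  assumes T: "open T" "(a, b) \<in> T"
    and Ds: "\<And>s r. (s, r) \<in> T \<Longrightarrow> ((\<lambda>s. g s r) has_real_derivative gs s r) (at s)"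
    and Dr: "\<And>s r. (s, r) \<in> T \<Longrightarrow> ((\<lambda>r. g s r) has_real_derivative gr s r) (at r)"
    and Dsr: "\<And>s r. (s, r) \<in> T \<Longrightarrow> ((\<lambda>r. gs s r) has_real_derivative gsr s r) (at r)"
    and Drs: "\<And>s r. (s, r) \<in> T \<Longrightarrow> ((\<lambda>s. gr s r) has_real_derivative grs s r) (at s)"
    and Csr: "continuous (at (a, b)) (\<lambda>q. gsr (fst q) (snd q))"
    and Crs: "continuous (at (a, b)) (\<lambda>q. grs (fst q) (snd q))"
  shows "gsr a b = grs a b"
proof (rule ccontr)
  assume "gsr a b \<noteq> grs a b"
  define \<epsilon> where "\<epsilon> = \<bar>gsr a b - grs a b\<bar> / 2"
  have "\<epsilon> > 0" using \<open>gsr a b \<noteq> grs a b\<close> by (simp add: \<epsilon>_def)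
  obtain d0 where d0: "d0 > 0" "ball (a, b) d0 \<subseteq> T"
    using T open_contains_ball by blast
  obtain d1 where d1: "d1 > 0"
    "\<And>q. dist q (a, b) < d1 \<Longrightarrow> dist (gsr (fst q) (snd q)) (gsr a b) < \<epsilon>"
    using Csr \<open>\<epsilon> > 0\<close> unfolding continuous_at_eps_delta by force
  obtain d2 where d2: "d2 > 0"
    "\<And>q. dist q (a, b) < d2 \<Longrightarrow> dist (grs (fst q) (snd q)) (grs a b) < \<epsilon>"
    using Crs \<open>\<epsilon> > 0\<close> unfolding continuous_at_eps_delta by force
  define h where "h = min d0 (min d1 d2) / 3"
  have h: "h > 0" using d0 d1 d2 by (simp add: h_def)
  have near: "dist (s, r) (a, b) < min d0 (min d1 d2)" if "s \<in> {a..a+h}" "r \<in> {b..b+h}" for s r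
  proof -
    have "dist (s, r) (a, b) \<le> \<bar>s - a\<bar> + \<bar>r - b\<bar>"
      using sqrt_sum_squares_le_sum_abs by (simp add: dist_Pair_Pair dist_real_def)
    also have "\<dots> < min d0 (min d1 d2)" using that h d0 d1 d2 by (auto simp: h_def min_def)
    finally show ?thesis .
  qed
  hence inT: "(s, r) \<in> T" if "s \<in> {a..a+h}" "r \<in> {b..b+h}" for s r
    using that d0(2) by (force simp: dist_commute)
  obtain a' b' c e where abce: "a' \<in> {a..a+h}" "b' \<in> {b..b+h}" "c \<in> {a..a+h}" "e \<in> {b..b+h}"
    "gsr a' b' = grs c e"
    using mixed_difference_MVT[OF h, of a b g gs gr gsr grs] Ds Dr Dsr Drs inT by blast
  have "\<bar>gsr a' b' - gsr a b\<bar> < \<epsilon>" "\<bar>grs c e - grs a b\<bar> < \<epsilon>"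
    using d1(2)[of "(a', b')"] d2(2)[of "(c, e)"] near abce by (auto simp: dist_real_def)
  thus False using abce(5) unfolding \<epsilon>_def by argo
qed

lemma pderiv_continuous_along:
  assumes "smooth_on4 S f" "g \<in> pderivs f" "\<gamma> q \<in> S" "isCont \<gamma> q"
  shows "isCont (\<lambda>q. uncurry4 g (\<gamma> q)) q"
  using assms differentiable_imp_continuous_within isCont_o2
  unfolding smooth_on4_def by blast

lemma py_px_commute:
  assumes "open S" "smooth_on4 S f" "(x, y, z, t) \<in> S"
  shows "py (px f) x y z t = px (py f) x y z t"
proof (rule mixed_partials_commute[where T = "(\<lambda>q. (fst q, snd q, z, t)) -` S"
    and g = "\<lambda>s r. f s r z t"
    and gs = "\<lambda>s r. px f s r z t" and gr = "\<lambda>s r. py f s r z t"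
    and gsr = "\<lambda>s r. py (px f) s r z t" and grs = "\<lambda>s r. px (py f) s r z t"])
  show "open ((\<lambda>q. (fst q, snd q, z, t)) -` S)"
    using assms(1) by (rule continuous_open_vimage) (intro continuous_intros)
  have cont: "isCont (\<lambda>q. g (fst q) (snd q) z t) (x, y)" if "g \<in> pderivs f" for g
    using pderiv_continuous_along[OF assms(2) that, of "\<lambda>q. (fst q, snd q, z, t)" "(x, y)"] assms(3)
    by (auto intro: continuous_intros)
  show "isCont (\<lambda>q. py (px f) (fst q) (snd q) z t) (x, y)"
    "isCont (\<lambda>q. px (py f) (fst q) (snd q) z t) (x, y)"
    by (rule cont, intro pderivs.intros)+
qed (use assms in \<open>auto intro: has_px has_py pderivs.intros\<close>)

lemma pz_px_commute:
  assumes "open S" "smooth_on4 S f" "(x, y, z, t) \<in> S"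
  shows "pz (px f) x y z t = px (pz f) x y z t"
proof (rule mixed_partials_commute[where T = "(\<lambda>q. (fst q, y, snd q, t)) -` S"
    and g = "\<lambda>s r. f s y r t"
    and gs = "\<lambda>s r. px f s y r t" and gr = "\<lambda>s r. pz f s y r t"
    and gsr = "\<lambda>s r. pz (px f) s y r t" and grs = "\<lambda>s r. px (pz f) s y r t"])
  show "open ((\<lambda>q. (fst q, y, snd q, t)) -` S)"
    using assms(1) by (rule continuous_open_vimage) (intro continuous_intros)
  have cont: "isCont (\<lambda>q. g (fst q) y (snd q) t) (x, z)" if "g \<in> pderivs f" for g
    using pderiv_continuous_along[OF assms(2) that, of "\<lambda>q. (fst q, y, snd q, t)" "(x, z)"] assms(3)
    by (auto intro: continuous_intros)
  show "isCont (\<lambda>q. pz (px f) (fst q) y (snd q) t) (x, z)"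
    "isCont (\<lambda>q. px (pz f) (fst q) y (snd q) t) (x, z)"
    by (rule cont, intro pderivs.intros)+
qed (use assms in \<open>auto intro: has_px has_pz pderivs.intros\<close>)

lemma pt_px_commute:
  assumes "open S" "smooth_on4 S f" "(x, y, z, t) \<in> S"
  shows "pt (px f) x y z t = px (pt f) x y z t"
proof (rule mixed_partials_commute[where T = "(\<lambda>q. (fst q, y, z, snd q)) -` S"
    and g = "\<lambda>s r. f s y z r"
    and gs = "\<lambda>s r. px f s y z r" and gr = "\<lambda>s r. pt f s y z r"
    and gsr = "\<lambda>s r. pt (px f) s y z r" and grs = "\<lambda>s r. px (pt f) s y z r"])
  show "open ((\<lambda>q. (fst q, y, z, snd q)) -` S)"
    using assms(1) by (rule continuous_open_vimage) (intro continuous_intros)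
  have cont: "isCont (\<lambda>q. g (fst q) y z (snd q)) (x, t)" if "g \<in> pderivs f" for g
    using pderiv_continuous_along[OF assms(2) that, of "\<lambda>q. (fst q, y, z, snd q)" "(x, t)"] assms(3)
    by (auto intro: continuous_intros)
  show "isCont (\<lambda>q. pt (px f) (fst q) y z (snd q)) (x, t)"
    "isCont (\<lambda>q. px (pt f) (fst q) y z (snd q)) (x, t)"
    by (rule cont, intro pderivs.intros)+
qed (use assms in \<open>auto intro: has_px has_pt pderivs.intros\<close>)

lemma pz_py_commute:
  assumes "open S" "smooth_on4 S f" "(x, y, z, t) \<in> S"
  shows "pz (py f) x y z t = py (pz f) x y z t"
proof (rule mixed_partials_commute[where T = "(\<lambda>q. (x, fst q, snd q, t)) -` S"
    and g = "\<lambda>s r. f x s r t"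
    and gs = "\<lambda>s r. py f x s r t" and gr = "\<lambda>s r. pz f x s r t"
    and gsr = "\<lambda>s r. pz (py f) x s r t" and grs = "\<lambda>s r. py (pz f) x s r t"])
  show "open ((\<lambda>q. (x, fst q, snd q, t)) -` S)"
    using assms(1) by (rule continuous_open_vimage) (intro continuous_intros)
  have cont: "isCont (\<lambda>q. g x (fst q) (snd q) t) (y, z)" if "g \<in> pderivs f" for g
    using pderiv_continuous_along[OF assms(2) that, of "\<lambda>q. (x, fst q, snd q, t)" "(y, z)"] assms(3)
    by (auto intro: continuous_intros)
  show "isCont (\<lambda>q. pz (py f) x (fst q) (snd q) t) (y, z)"
    "isCont (\<lambda>q. py (pz f) x (fst q) (snd q) t) (y, z)"
    by (rule cont, intro pderivs.intros)+
qed (use assms in \<open>auto intro: has_py has_pz pderivs.intros\<close>)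

lemma pt_py_commute:
  assumes "open S" "smooth_on4 S f" "(x, y, z, t) \<in> S"
  shows "pt (py f) x y z t = py (pt f) x y z t"
proof (rule mixed_partials_commute[where T = "(\<lambda>q. (x, fst q, z, snd q)) -` S"
    and g = "\<lambda>s r. f x s z r"
    and gs = "\<lambda>s r. py f x s z r" and gr = "\<lambda>s r. pt f x s z r"
    and gsr = "\<lambda>s r. pt (py f) x s z r" and grs = "\<lambda>s r. py (pt f) x s z r"])
  show "open ((\<lambda>q. (x, fst q, z, snd q)) -` S)"
    using assms(1) by (rule continuous_open_vimage) (intro continuous_intros)
  have cont: "isCont (\<lambda>q. g x (fst q) z (snd q)) (y, t)" if "g \<in> pderivs f" for g
    using pderiv_continuous_along[OF assms(2) that, of "\<lambda>q. (x, fst q, z, snd q)" "(y, t)"] assms(3)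
    by (auto intro: continuous_intros)
  show "isCont (\<lambda>q. pt (py f) x (fst q) z (snd q)) (y, t)"
    "isCont (\<lambda>q. py (pt f) x (fst q) z (snd q)) (y, t)"
    by (rule cont, intro pderivs.intros)+
qed (use assms in \<open>auto intro: has_py has_pt pderivs.intros\<close>)

lemma third_partials_commute:
  assumes S: "open S" and f: "smooth_on4 S f" and p: "(x, y, z, t) \<in> S"
  shows "px (pz (py f)) x y z t = py (pz (px f)) x y z t"
    and "px (px (pt f)) x y z t = pt (px (px f)) x y z t"
proof -
  have fx: "smooth_on4 S (px f)" and fy: "smooth_on4 S (py f)"
    using f by (auto intro: smooth_on4_pderivs pderivs.intros)
  have "\<forall>q\<in>S. uncurry4 (px (py f)) q = uncurry4 (py (px f)) q"
    "\<forall>q\<in>S. uncurry4 (px (pt f)) q = uncurry4 (pt (px f)) q"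
    by (auto intro!: ball_prod4I py_px_commute[OF S f, symmetric] pt_px_commute[OF S f, symmetric])
  note cong = pz_cong_on[OF S this(1) p] px_cong_on[OF S this(2) p]
  show "px (pz (py f)) x y z t = py (pz (px f)) x y z t"
    and "px (px (pt f)) x y z t = pt (px (px f)) x y z t"
    using cong pz_px_commute[OF S fy p] pz_py_commute[OF S fx p] pt_px_commute[OF S fx p]
    by simp_all
qed

lemma px_eqI: "((\<lambda>s. F s y z t) has_real_derivative D) (at x) \<Longrightarrow> px F x y z t = D"
  unfolding px_def by (rule DERIV_imp_deriv)
lemma py_eqI: "((\<lambda>s. F x s z t) has_real_derivative D) (at y) \<Longrightarrow> py F x y z t = D"
  unfolding py_def by (rule DERIV_imp_deriv)
lemma pz_eqI: "((\<lambda>s. F x y s t) has_real_derivative D) (at z) \<Longrightarrow> pz F x y z t = D"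
  unfolding pz_def by (rule DERIV_imp_deriv)
lemma pt_eqI: "((\<lambda>s. F x y z s) has_real_derivative D) (at t) \<Longrightarrow> pt F x y z t = D"
  unfolding pt_def by (rule DERIV_imp_deriv)

(* The quotient-rule form of eqn u, which unlike eqn u can be differentiated once more. *)
definition eqn_expanded :: "fun4 \<Rightarrow> fun4" where
  "eqn_expanded u = (\<lambda>x y z t.
     (pz (py u) x y z t - cA u x y z t * py u x y z t
      - (px (pt u) x y z t - cB u x y z t * pt u x y z t)) / px u x y z t)"

definition rhs_z :: "fun4 \<Rightarrow> fun4 \<Rightarrow> fun4 \<Rightarrow> fun4" where
  "rhs_z u U V = (\<lambda>x y z t. cA u x y z t * V x y z t + rA u U x y z t)"

definition rhs_x :: "fun4 \<Rightarrow> fun4 \<Rightarrow> fun4 \<Rightarrow> fun4" where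
  "rhs_x u U V = (\<lambda>x y z t. cB u x y z t * V x y z t + rB u U x y z t)"

context
  fixes S :: "(real \<times> real \<times> real \<times> real) set" and u :: fun4
  assumes S: "open S" and u: "smooth_on4 S u" and ux: "\<forall>q\<in>S. uncurry4 (px u) q \<noteq> 0"
begin

lemma ux_nonzero: "(x, y, z, t) \<in> S \<Longrightarrow> px u x y z t \<noteq> 0"
  using ux by force

lemma px_divide_ux:
  assumes p: "(x, y, z, t) \<in> S" and F: "(\<lambda>s. F s y z t) differentiable (at x)"
  shows "px (\<lambda>x y z t. F x y z t / px u x y z t) x y z t
    = (px F x y z t - cB u x y z t * F x y z t) / px u x y z t"
proof -
  have "((\<lambda>s. F s y z t) has_real_derivative px F x y z t) (at x)"
    using F by (simp add: px_def DERIV_deriv_iff_real_differentiable)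
  thus ?thesis
    using ux_nonzero[OF p] unfolding cB_def
    by (intro px_eqI) (auto intro!: derivative_eq_intros has_px[OF u _ p] pderivs.intros
        simp: field_simps power2_eq_square)
qed

lemma pz_divide_ux:
  assumes p: "(x, y, z, t) \<in> S" and F: "(\<lambda>s. F x y s t) differentiable (at z)"
  shows "pz (\<lambda>x y z t. F x y z t / px u x y z t) x y z t
    = (pz F x y z t - cA u x y z t * F x y z t) / px u x y z t"
proof -
  have "((\<lambda>s. F x y s t) has_real_derivative pz F x y z t) (at z)"
    using F by (simp add: pz_def DERIV_deriv_iff_real_differentiable)
  thus ?thesis
    using ux_nonzero[OF p] unfolding cA_def
    by (intro pz_eqI) (auto intro!: derivative_eq_intros has_pz[OF u _ p] pderivs.intros
        simp: field_simps power2_eq_square)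
qed

lemma px_cA_eq_pz_cB:
  assumes p: "(x, y, z, t) \<in> S"
  shows "px (cA u) x y z t = pz (cB u) x y z t"
proof -
  have "(\<lambda>s. pz (px u) s y z t) differentiable (at x)"
    "(\<lambda>s. px (px u) x y s t) differentiable (at z)"
    using has_px[OF u _ p, of "pz (px u)"] has_pz[OF u _ p, of "px (px u)"]
    by (auto intro: pderivs.intros simp: real_differentiable_def)
  hence "px (cA u) x y z t = (px (pz (px u)) x y z t - cB u x y z t * pz (px u) x y z t) / px u x y z t"
    "pz (cB u) x y z t = (pz (px (px u)) x y z t - cA u x y z t * px (px u) x y z t) / px u x y z t"
    unfolding cA_def cB_def by (simp_all add: px_divide_ux[OF p] pz_divide_ux[OF p] cA_def cB_def)
  moreover have "pz (px (px u)) x y z t = px (pz (px u)) x y z t"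
    using pz_px_commute[OF S smooth_on4_pderivs[OF u] p] by (simp add: pderivs.intros)
  ultimately show ?thesis by (simp add: cA_def cB_def)
qed

lemma lin_eq_rA_rB:
  assumes V: "smooth_on4 S V" and p: "(x, y, z, t) \<in> S"
  shows "lin u V x y z t
    = (pz (rB u V) x y z t - cA u x y z t * rB u V x y z t
       - (px (rA u V) x y z t - cB u x y z t * rA u V x y z t)) / px u x y z t"
proof -
  have dA: "(\<lambda>s. rA u V s y z t) differentiable (at x)"
    and dB: "(\<lambda>s. rB u V x y s t) differentiable (at z)"
    unfolding rA_def rB_def real_differentiable_def using ux_nonzero[OF p]
    by (auto intro!: exI derivative_eq_intros has_px[OF u _ p] has_px[OF V _ p]
        has_pz[OF u _ p] has_pz[OF V _ p] pderivs.intros)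
  have eqB: "\<forall>q\<in>S. uncurry4 (\<lambda>x y z t. (px u x y z t * py V x y z t - py u x y z t * px V x y z t)
      / (px u x y z t)^2) q = uncurry4 (\<lambda>x y z t. rB u V x y z t / px u x y z t) q"
    and eqA: "\<forall>q\<in>S. uncurry4 (\<lambda>x y z t. (px u x y z t * pt V x y z t - pt u x y z t * px V x y z t)
      / (px u x y z t)^2) q = uncurry4 (\<lambda>x y z t. rA u V x y z t / px u x y z t) q"
    by (auto intro!: ball_prod4I dest!: ux_nonzero simp: rA_def rB_def field_simps power2_eq_square)
  have "lin u V x y z t = pz (\<lambda>x y z t. rB u V x y z t / px u x y z t) x y z t
      - px (\<lambda>x y z t. rA u V x y z t / px u x y z t) x y z t"
    unfolding lin_def by (simp only: pz_cong_on[OF S eqB p] px_cong_on[OF S eqA p])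
  also have "\<dots> = (pz (rB u V) x y z t - cA u x y z t * rB u V x y z t) / px u x y z t
      - (px (rA u V) x y z t - cB u x y z t * rA u V x y z t) / px u x y z t"
    by (simp only: px_divide_ux[OF p, where F = "rA u V", OF dA]
        pz_divide_ux[OF p, where F = "rB u V", OF dB])
  finally show ?thesis by (simp add: diff_divide_distrib)
qed

lemma compat_eq_lin:
  assumes U: "smooth_on4 S U" and p: "(x, y, z, t) \<in> S"
  shows "compat u U W x y z t = - px u x y z t * lin u U x y z t"
proof -
  have "compat u U W x y z t = - (pz (rB u U) x y z t - cA u x y z t * rB u U x y z t
      - (px (rA u U) x y z t - cB u x y z t * rA u U x y z t))"
    unfolding compat_def px_cA_eq_pz_cB[OF p] by (simp add: algebra_simps)
  thus ?thesis using ux_nonzero[OF p] by (simp add: lin_eq_rA_rB[OF U p])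
qed

lemma pz_rB:
  assumes V: "smooth_on4 S V" and p: "(x, y, z, t) \<in> S"
  shows "pz (rB u V) x y z t = pz (py V) x y z t
      - (pz (py u) x y z t - cA u x y z t * py u x y z t) / px u x y z t * px V x y z t
      - py u x y z t / px u x y z t * pz (px V) x y z t"
  using ux_nonzero[OF p] unfolding rB_def cA_def cB_def
  by (intro pz_eqI) (auto intro!: derivative_eq_intros
      has_pz[OF u _ p] has_pz[OF V _ p] pderivs.intros
      simp: field_simps power2_eq_square)

lemma px_rB:
  assumes V: "smooth_on4 S V" and p: "(x, y, z, t) \<in> S"
  shows "px (rB u V) x y z t = px (py V) x y z t
      - (px (py u) x y z t - cB u x y z t * py u x y z t) / px u x y z t * px V x y z t
      - py u x y z t / px u x y z t * px (px V) x y z t"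
  using ux_nonzero[OF p] unfolding rB_def cA_def cB_def
  by (intro px_eqI) (auto intro!: derivative_eq_intros
      has_px[OF u _ p] has_px[OF V _ p] pderivs.intros
      simp: field_simps power2_eq_square)

lemma pt_rB:
  assumes V: "smooth_on4 S V" and p: "(x, y, z, t) \<in> S"
  shows "pt (rB u V) x y z t = pt (py V) x y z t
      - (pt (py u) x y z t - pt (px u) x y z t / px u x y z t * py u x y z t) / px u x y z t * px V x y z t
      - py u x y z t / px u x y z t * pt (px V) x y z t"
  using ux_nonzero[OF p] unfolding rB_def cA_def cB_def
  by (intro pt_eqI) (auto intro!: derivative_eq_intros
      has_pt[OF u _ p] has_pt[OF V _ p] pderivs.intros
      simp: field_simps power2_eq_square)

lemma px_rA:
  assumes V: "smooth_on4 S V" and p: "(x, y, z, t) \<in> S"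
  shows "px (rA u V) x y z t = px (pt V) x y z t
      - (px (pt u) x y z t - cB u x y z t * pt u x y z t) / px u x y z t * px V x y z t
      - pt u x y z t / px u x y z t * px (px V) x y z t"
  using ux_nonzero[OF p] unfolding rA_def cA_def cB_def
  by (intro px_eqI) (auto intro!: derivative_eq_intros
      has_px[OF u _ p] has_px[OF V _ p] pderivs.intros
      simp: field_simps power2_eq_square)

lemma py_rA:
  assumes V: "smooth_on4 S V" and p: "(x, y, z, t) \<in> S"
  shows "py (rA u V) x y z t = py (pt V) x y z t
      - (py (pt u) x y z t - py (px u) x y z t / px u x y z t * pt u x y z t) / px u x y z t * px V x y z t
      - pt u x y z t / px u x y z t * py (px V) x y z t"
  using ux_nonzero[OF p] unfolding rA_def cA_def cB_def
  by (intro py_eqI) (auto intro!: derivative_eq_intros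
      has_py[OF u _ p] has_py[OF V _ p] pderivs.intros
      simp: field_simps power2_eq_square)

lemma pz_rhs_x:
  assumes U: "smooth_on4 S U" and V: "smooth_on4 S V" and p: "(x, y, z, t) \<in> S"
  shows "pz (rhs_x u U V) x y z t =
      (pz (px (px u)) x y z t - cA u x y z t * px (px u) x y z t) / px u x y z t * V x y z t
      + cB u x y z t * pz V x y z t + pz (rB u U) x y z t"
  using ux_nonzero[OF p] unfolding pz_rB[OF U p] unfolding rhs_x_def cA_def cB_def rB_def
  by (intro pz_eqI) (auto intro!: derivative_eq_intros
      has_pz[OF u _ p] has_pz[OF U _ p] has_pz[OF V _ p] pderivs.intros
      simp: field_simps power2_eq_square)

lemma px_rhs_x:
  assumes U: "smooth_on4 S U" and V: "smooth_on4 S V" and p: "(x, y, z, t) \<in> S"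
  shows "px (rhs_x u U V) x y z t =
      (px (px (px u)) x y z t - cB u x y z t * px (px u) x y z t) / px u x y z t * V x y z t
      + cB u x y z t * px V x y z t + px (rB u U) x y z t"
  using ux_nonzero[OF p] unfolding px_rB[OF U p] unfolding rhs_x_def cA_def cB_def rB_def
  by (intro px_eqI) (auto intro!: derivative_eq_intros
      has_px[OF u _ p] has_px[OF U _ p] has_px[OF V _ p] pderivs.intros
      simp: field_simps power2_eq_square)

lemma pt_rhs_x:
  assumes U: "smooth_on4 S U" and V: "smooth_on4 S V" and p: "(x, y, z, t) \<in> S"
  shows "pt (rhs_x u U V) x y z t =
      (pt (px (px u)) x y z t - pt (px u) x y z t / px u x y z t * px (px u) x y z t) / px u x y z t * V x y z t
      + cB u x y z t * pt V x y z t + pt (rB u U) x y z t"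
  using ux_nonzero[OF p] unfolding pt_rB[OF U p] unfolding rhs_x_def cA_def cB_def rB_def
  by (intro pt_eqI) (auto intro!: derivative_eq_intros
      has_pt[OF u _ p] has_pt[OF U _ p] has_pt[OF V _ p] pderivs.intros
      simp: field_simps power2_eq_square)

lemma py_rhs_z:
  assumes U: "smooth_on4 S U" and V: "smooth_on4 S V" and p: "(x, y, z, t) \<in> S"
  shows "py (rhs_z u U V) x y z t =
      (py (pz (px u)) x y z t - py (px u) x y z t / px u x y z t * pz (px u) x y z t) / px u x y z t * V x y z t
      + cA u x y z t * py V x y z t + py (rA u U) x y z t"
  using ux_nonzero[OF p] unfolding py_rA[OF U p] unfolding rhs_z_def cA_def cB_def rA_def
  by (intro py_eqI) (auto intro!: derivative_eq_intros
      has_py[OF u _ p] has_py[OF U _ p] has_py[OF V _ p] pderivs.intros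
      simp: field_simps power2_eq_square)

lemma eqn_eq_expanded:
  assumes p: "(x, y, z, t) \<in> S"
  shows "eqn u x y z t = eqn_expanded u x y z t"
proof -
  have "(\<lambda>s. py u x y s t) differentiable (at z)" "(\<lambda>s. pt u s y z t) differentiable (at x)"
    using has_pz[OF u _ p, of "py u"] has_px[OF u _ p, of "pt u"]
    by (auto intro: pderivs.intros simp: real_differentiable_def)
  thus ?thesis
    unfolding eqn_def eqn_expanded_def
    by (simp add: pz_divide_ux[OF p] px_divide_ux[OF p] diff_divide_distrib)
qed

lemma px_eqn_expanded:
  assumes p: "(x, y, z, t) \<in> S"
  shows "px (eqn_expanded u) x y z t
    = (px (pz (py u)) x y z t
       - (px (pz (px u)) x y z t - cB u x y z t * pz (px u) x y z t) / px u x y z t * py u x y z t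
       - cA u x y z t * px (py u) x y z t
       - (px (px (pt u)) x y z t
          - (px (px (px u)) x y z t - cB u x y z t * px (px u) x y z t) / px u x y z t * pt u x y z t
          - cB u x y z t * px (pt u) x y z t)
       - cB u x y z t * px u x y z t * eqn_expanded u x y z t) / px u x y z t"
proof -
  define N where "N = (\<lambda>x y z t. pz (py u) x y z t - cA u x y z t * py u x y z t
    - (px (pt u) x y z t - cB u x y z t * pt u x y z t))"
  have N_x: "((\<lambda>s. N s y z t) has_real_derivative px (pz (py u)) x y z t
       - (px (pz (px u)) x y z t - cB u x y z t * pz (px u) x y z t) / px u x y z t * py u x y z t
       - cA u x y z t * px (py u) x y z t
       - (px (px (pt u)) x y z t
          - (px (px (px u)) x y z t - cB u x y z t * px (px u) x y z t) / px u x y z t * pt u x y z t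
          - cB u x y z t * px (pt u) x y z t)) (at x)"
    using ux_nonzero[OF p] unfolding N_def cA_def cB_def
    by (auto intro!: derivative_eq_intros has_px[OF u _ p] pderivs.intros
        simp: field_simps power2_eq_square)
  have "(\<lambda>s. N s y z t) differentiable (at x)"
    using N_x by (auto simp: real_differentiable_def)
  moreover have "eqn_expanded u = (\<lambda>x y z t. N x y z t / px u x y z t)"
    by (simp add: eqn_expanded_def N_def)
  ultimately show ?thesis
    using ux_nonzero[OF p] by (simp add: px_divide_ux[OF p] px_eqI[where F = N, OF N_x])
qed

lemma lin_recursion_identity:
  assumes U: "smooth_on4 S U" and V: "smooth_on4 S V" and p: "(x, y, z, t) \<in> S"
    and Vz: "\<forall>q\<in>S. uncurry4 (pz V) q = uncurry4 (rhs_z u U V) q"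
    and Vx: "\<forall>q\<in>S. uncurry4 (px V) q = uncurry4 (rhs_x u U V) q"
  shows "lin u V x y z t = V x y z t / px u x y z t * px (eqn_expanded u) x y z t
      - rB u U x y z t / px u x y z t * eqn_expanded u x y z t
      - py u x y z t / px u x y z t * lin u U x y z t"
proof -
  have V_x: "px V x y z t = rhs_x u U V x y z t" and V_z: "pz V x y z t = rhs_z u U V x y z t"
    using Vx Vz p by force+
  have V_xz: "pz (px V) x y z t = pz (rhs_x u U V) x y z t"
    and V_xx: "px (px V) x y z t = px (rhs_x u U V) x y z t"
    and V_zy: "py (pz V) x y z t = py (rhs_z u U V) x y z t"
    and V_xt: "pt (px V) x y z t = pt (rhs_x u U V) x y z t"
    by (rule pz_cong_on[OF S Vx p] px_cong_on[OF S Vx p] py_cong_on[OF S Vz p] pt_cong_on[OF S Vx p])+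
  have V_sym: "pz (py V) x y z t = py (pz V) x y z t" "px (pt V) x y z t = pt (px V) x y z t"
    using pz_py_commute[OF S V p] pt_px_commute[OF S V p] by simp_all
  have U_sym: "py (px U) x y z t = px (py U) x y z t" "pt (py U) x y z t = py (pt U) x y z t"
    "pt (px U) x y z t = px (pt U) x y z t"
    using py_px_commute[OF S U p] pt_py_commute[OF S U p] pt_px_commute[OF S U p] by simp_all
  have u_sym: "px (py u) x y z t = py (px u) x y z t" "px (pt u) x y z t = pt (px u) x y z t"
    "py (pt u) x y z t = pt (py u) x y z t" "px (pz (px u)) x y z t = pz (px (px u)) x y z t"
    using py_px_commute[OF S u p] pt_px_commute[OF S u p] pt_py_commute[OF S u p]
      pz_px_commute[OF S smooth_on4_pderivs[OF u] p] by (simp_all add: pderivs.intros)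
  note u_sym3 = third_partials_commute[OF S u p]
  \<comment> \<open>With b = 1/u_x, the claim is a polynomial identity modulo the relation u_x b = 1.\<close>
  define b where "b = inverse (px u x y z t)"
  have ab: "px u x y z t * b = 1"
    using ux_nonzero[OF p] by (simp add: b_def)
  show ?thesis
    unfolding lin_eq_rA_rB[OF V p] lin_eq_rA_rB[OF U p] px_eqn_expanded[OF p]
    unfolding eqn_expanded_def pz_rB[OF V p] px_rA[OF V p] pz_rB[OF U p] px_rA[OF U p]
      V_sym V_xz V_xx V_zy V_xt pz_rhs_x[OF U V p] px_rhs_x[OF U V p] py_rhs_z[OF U V p]
      pt_rhs_x[OF U V p] px_rB[OF U p] pt_rB[OF U p] py_rA[OF U p] U_sym u_sym u_sym3
    unfolding rA_def rB_def V_x V_z rhs_x_def rhs_z_def cA_def cB_def divide_inverse b_def[symmetric]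
    using ab by algebra
qed

end

theorem mainTheorem1:
  fixes S :: "(real \<times> real \<times> real \<times> real) set"
    and u U :: "real \<Rightarrow> real \<Rightarrow> real \<Rightarrow> real \<Rightarrow> real"
  assumes S_open: "open S"
    and u_smooth: "smooth_on4 S u"
    and U_smooth: "smooth_on4 S U"
    and ux_nz: "\<forall>p\<in>S. uncurry4 (px u) p \<noteq> 0"
    and u_eq: "\<forall>p\<in>S. uncurry4 (eqn u) p = 0"
    and U_sym: "\<forall>p\<in>S. uncurry4 (lin u U) p = 0"
  shows "(\<forall>p\<in>S. \<forall>W::real. uncurry4 (compat u U W) p = 0)
       \<and> (\<forall>Ut. smooth_on4 S Ut
              \<longrightarrow> (\<forall>p\<in>S. uncurry4 (pz Ut) p - uncurry4 (cA u) p * uncurry4 Ut p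
                            = uncurry4 (pt U) p - uncurry4 (pt u) p / uncurry4 (px u) p * uncurry4 (px U) p)
              \<longrightarrow> (\<forall>p\<in>S. uncurry4 (px Ut) p - uncurry4 (cB u) p * uncurry4 Ut p
                            = uncurry4 (py U) p - uncurry4 (py u) p / uncurry4 (px u) p * uncurry4 (px U) p)
              \<longrightarrow> (\<forall>p\<in>S. uncurry4 (lin u Ut) p = 0))"
proof (intro conjI allI impI)
  note setting = S_open u_smooth ux_nz
  have lin_U: "lin u U x y z t = 0" if "(x, y, z, t) \<in> S" for x y z t
    using U_sym that by force
  show "\<forall>p\<in>S. \<forall>W. uncurry4 (compat u U W) p = 0"
    by (intro ball_prod4I allI) (simp add: compat_eq_lin[OF setting U_smooth] lin_U)
  fix Ut
  assume Ut: "smooth_on4 S Ut"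
    and Ut_z: "\<forall>p\<in>S. uncurry4 (pz Ut) p - uncurry4 (cA u) p * uncurry4 Ut p
                    = uncurry4 (pt U) p - uncurry4 (pt u) p / uncurry4 (px u) p * uncurry4 (px U) p"
    and Ut_x: "\<forall>p\<in>S. uncurry4 (px Ut) p - uncurry4 (cB u) p * uncurry4 Ut p
                    = uncurry4 (py U) p - uncurry4 (py u) p / uncurry4 (px u) p * uncurry4 (px U) p"
  have "\<forall>q\<in>S. uncurry4 (pz Ut) q = uncurry4 (rhs_z u U Ut) q"
    "\<forall>q\<in>S. uncurry4 (px Ut) q = uncurry4 (rhs_x u U Ut) q"
    using Ut_z Ut_x by (auto intro!: ball_prod4I simp: rhs_z_def rhs_x_def rA_def rB_def algebra_simps)
  note recursion = lin_recursion_identity[OF setting U_smooth Ut _ this]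
  have E0: "\<forall>q\<in>S. uncurry4 (eqn_expanded u) q = uncurry4 (\<lambda>x y z t. 0) q"
    using u_eq by (auto intro!: ball_prod4I simp: eqn_eq_expanded[OF setting, symmetric])
  have "px (eqn_expanded u) x y z t = 0" if "(x, y, z, t) \<in> S" for x y z t
    using px_cong_on[OF S_open E0 that] by (simp add: px_eqI[OF DERIV_const])
  then show "\<forall>p\<in>S. uncurry4 (lin u Ut) p = 0"
    using E0 by (auto intro!: ball_prod4I simp: recursion lin_U)
qed

end
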